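(* A hypergraph $H$ is acyclic if and only if it is Vorob'ev regular.
   Context: A hypergraph $H=(V,E)$ has a finite vertex set $V$ and a set $E$ of nonempty subsets of $V$. Acyclicity: the reduction $R(H)$ keeps only hyperedges not properly contained in another; $H$ is reduced if $H=R(H)$. For $W\subseteq V$, $H[W]=(W,\{X\cap W:X\in E\}\setminus\{\emptyset\})$. For a reduced $H$ and distinct hyperedges $X,Y$ with $X\cap Y\neq\emptyset$, $X\cap Y$ is an articulation set if $R(H[V\setminus(X\cap Y)])$ has more connected components than $H$. A reduced $H$ is acyclic if for every $W\subseteq V$ such that $R(H[W])$ is connected with more than one hyperedge, $R(H[W])$ has an articulation set; an arbitrary $H$ is acyclic if $R(H)$ is (standard $\alpha$-acyclicity). Vorob'ev regularity: a complex is a hypergraph whose set of hyperedges is closed under taking subsets; the downward closure of $H$ is the complex whose hyperedges are all subsets of hyperedges of $H$. In a complex $\mathcal K$, a hyperedge is maximal if not a proper subset of another hyperedge. For distinct maximal hyperedges $X,Y$, $X$ yields a maximal intersection with $Y$ if there is no maximal hyperedge $Z\notin\{X,Y\}$ with $X\cap Y\subsetneq X\cap Z$. A maximal hyperedge $X$ is extreme if all maximal intersections of $X$ are equal. The proper vertices of an extreme $X$ are those belonging to no other maximal hyperedge; the normal subcomplex corresponding to $X$ consists of all hyperedges of $\mathcal K$ disjoint from the proper vertices of $X$. A normal series is a sequence $\mathcal K=\mathcal K_0\supset\mathcal K_1\supset\cdots\supset\mathcal K_r$ with each $\mathcal K_{\ell+1}$ a normal subcomplex of $\mathcal K_\ell$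 ($0\le\ell<r$) and $\mathcal K_r$ having no extreme hyperedge. $\mathcal K$ is regular if it has a normal series whose last term is the complex without vertices. $H$ is Vorob'ev regular if its downward closure is regular. *)

theory Defs
  imports Main
begin

definition hypergraph :: "'a set \<Rightarrow> 'a set set \<Rightarrow> bool" where
  "hypergraph V E \<longleftrightarrow> finite V \<and> E \<subseteq> Pow V \<and> {} \<notin> E"

definition reduce :: "'a set set \<Rightarrow> 'a set set" where
  "reduce E = {X \<in> E. \<not> (\<exists>Y\<in>E. X \<subset> Y)}"

definition is_reduced :: "'a set set \<Rightarrow> bool" where
  "is_reduced E \<longleftrightarrow> reduce E = E"

text \<open>Edges of the induced hypergraph H[W] (its vertex set is W).\<close>
definition induce :: "'a set \<Rightarrow> 'a set set \<Rightarrow> 'a set set" where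
  "induce W E = {X \<inter> W | X. X \<in> E} - {{}}"

text \<open>Connected components of (V,E): classes of the reflexive-transitive closure of
  "lie in a common hyperedge", restricted to V (isolated vertices are singleton components).\<close>
definition components :: "'a set \<Rightarrow> 'a set set \<Rightarrow> 'a set set" where
  "components V E = V // (({(x, y). \<exists>X\<in>E. x \<in> X \<and> y \<in> X})\<^sup>* \<inter> (V \<times> V))"

definition ncomp :: "'a set \<Rightarrow> 'a set set \<Rightarrow> nat" where
  "ncomp V E = card (components V E)"

definition hg_connected :: "'a set \<Rightarrow> 'a set set \<Rightarrow> bool" where
  "hg_connected V E \<longleftrightarrow> ncomp V E = 1"

definition articulation_set :: "'a set \<Rightarrow> 'a set set \<Rightarrow> 'a set \<Rightarrow> bool" where
  "articulation_set V E S \<longleftrightarrow>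
     (\<exists>X\<in>E. \<exists>Y\<in>E. X \<noteq> Y \<and> X \<inter> Y \<noteq> {} \<and> S = X \<inter> Y) \<and>
     ncomp (V - S) (reduce (induce (V - S) E)) > ncomp V E"

definition acyclic_reduced :: "'a set \<Rightarrow> 'a set set \<Rightarrow> bool" where
  "acyclic_reduced V E \<longleftrightarrow>
     (\<forall>W\<subseteq>V. hg_connected W (reduce (induce W E)) \<and> card (reduce (induce W E)) > 1
        \<longrightarrow> (\<exists>S. articulation_set W (reduce (induce W E)) S))"

definition hg_acyclic :: "'a set \<Rightarrow> 'a set set \<Rightarrow> bool" where
  "hg_acyclic V E \<longleftrightarrow> acyclic_reduced V (reduce E)"

text \<open>A complex is represented by its set of hyperedges (its vertices are those lying in
  some hyperedge); it is closed under taking nonempty subsets.\<close>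
definition is_complex :: "'a set set \<Rightarrow> bool" where
  "is_complex K \<longleftrightarrow> {} \<notin> K \<and> (\<forall>X\<in>K. \<forall>Y. Y \<noteq> {} \<and> Y \<subseteq> X \<longrightarrow> Y \<in> K)"

definition down_closure :: "'a set set \<Rightarrow> 'a set set" where
  "down_closure E = {Y. Y \<noteq> {} \<and> (\<exists>X\<in>E. Y \<subseteq> X)}"

definition maximal_edge :: "'a set set \<Rightarrow> 'a set \<Rightarrow> bool" where
  "maximal_edge K X \<longleftrightarrow> X \<in> K \<and> \<not> (\<exists>Y\<in>K. X \<subset> Y)"

definition max_intersection :: "'a set set \<Rightarrow> 'a set \<Rightarrow> 'a set \<Rightarrow> bool" where
  "max_intersection K X Y \<longleftrightarrow> maximal_edge K X \<and> maximal_edge K Y \<and> X \<noteq> Y \<and>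
     \<not> (\<exists>Z. maximal_edge K Z \<and> Z \<noteq> X \<and> Z \<noteq> Y \<and> X \<inter> Y \<subset> X \<inter> Z)"

definition extreme :: "'a set set \<Rightarrow> 'a set \<Rightarrow> bool" where
  "extreme K X \<longleftrightarrow> maximal_edge K X \<and>
     (\<forall>Y Y'. max_intersection K X Y \<and> max_intersection K X Y' \<longrightarrow> X \<inter> Y = X \<inter> Y')"

definition proper_vertices :: "'a set set \<Rightarrow> 'a set \<Rightarrow> 'a set" where
  "proper_vertices K X = {v \<in> X. \<not> (\<exists>Y. maximal_edge K Y \<and> Y \<noteq> X \<and> v \<in> Y)}"

definition normal_subcomplex :: "'a set set \<Rightarrow> 'a set \<Rightarrow> 'a set set" where
  "normal_subcomplex K X = {Y \<in> K. Y \<inter> proper_vertices K X = {}}"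

definition normal_series :: "'a set set \<Rightarrow> (nat \<Rightarrow> 'a set set) \<Rightarrow> nat \<Rightarrow> bool" where
  "normal_series K Ks r \<longleftrightarrow> Ks 0 = K \<and>
     (\<forall>l<r. Ks (Suc l) \<subset> Ks l \<and>
        (\<exists>X. extreme (Ks l) X \<and> Ks (Suc l) = normal_subcomplex (Ks l) X)) \<and>
     \<not> (\<exists>X. extreme (Ks r) X)"

definition regular :: "'a set set \<Rightarrow> bool" where
  "regular K \<longleftrightarrow> (\<exists>Ks r. normal_series K Ks r \<and> Ks r = {})"

definition vorobev_regular :: "'a set \<Rightarrow> 'a set set \<Rightarrow> bool" where
  "vorobev_regular V E \<longleftrightarrow> regular (down_closure E)"

end

theory Submission
  imports Defs
begin

text \<open>
  Both properties are governed by ears. An ear of a reduced hypergraph \<open>F\<close> is an edge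
  \<open>A\<close> that meets all other edges inside a single further edge \<open>C\<close>. Call \<open>F\<close>
  two-eared if every edge \<open>Z\<close> is avoided by some ear, and \<open>E\<close> hereditarily two-eared
  if all reduced induced subhypergraphs of \<open>E\<close> are two-eared.

  Acyclicity is equivalent to being hereditarily two-eared. An ear \<open>A\<close> with witness \<open>C\<close>
  yields the articulation set \<open>A \<inter> C\<close>. Conversely, by induction on the vertex set: an
  articulation set \<open>S\<close> (or \<open>S = {}\<close> if \<open>F\<close> is disconnected) leaves a block \<open>D\<close>
  of the remaining vertices that misses the given edge \<open>Z\<close>; the subhypergraph induced on
  \<open>D \<union> S\<close> has an ear avoiding the edge that contains \<open>S\<close>, and this ear is an ear of
  \<open>F\<close> different from \<open>Z\<close>.

  Regularity is equivalent as well: the extreme edges of the downward closure of \<open>E\<close> are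
  exactly the ears, and the normal subcomplex of an ear \<open>X\<close> is the downward closure of
  \<open>E - {X}\<close>. Removing an ear and adding it back both preserve the hereditary two-ear
  property, so a normal series ending in the empty complex exists exactly when it holds.
\<close>

section \<open>Reduction and induced subhypergraphs\<close>

lemma reduce_subset: "reduce E \<subseteq> E"
  by (auto simp: reduce_def)

lemma reduce_maximal: "M \<in> reduce E \<Longrightarrow> Y \<in> E \<Longrightarrow> M \<subseteq> Y \<Longrightarrow> M = Y"
  unfolding reduce_def by blast

lemma reduce_covers:
  assumes "finite E" "X \<in> E"
  shows "\<exists>M\<in>reduce E. X \<subseteq> M"
proof -
  obtain M where M: "M \<in> E" "X \<subseteq> M" "\<forall>Y\<in>{Y \<in> E. X \<subseteq> Y}. M \<subseteq> Y \<longrightarrow> M = Y"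
    using finite_has_maximal2[of "{Y \<in> E. X \<subseteq> Y}" X] assms by auto
  then have "M \<in> reduce E" unfolding reduce_def by blast
  with M show ?thesis by blast
qed

lemma reduce_eq_if_cofinal:
  assumes sub: "E \<subseteq> E'" and cof: "\<forall>X\<in>E'. \<exists>Y\<in>E. X \<subseteq> Y"
  shows "reduce E = reduce E'"
proof (rule set_eqI)
  fix X
  have "(\<exists>Y\<in>E. X \<subset> Y) \<longleftrightarrow> (\<exists>Y\<in>E'. X \<subset> Y)"
    using sub cof by (meson psubset_subset_trans subsetD)
  moreover have "X \<in> E" if "X \<in> E'" "\<not> (\<exists>Y\<in>E'. X \<subset> Y)"
    using that sub cof by (metis psubsetI subsetD)
  ultimately show "X \<in> reduce E \<longleftrightarrow> X \<in> reduce E'"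
    unfolding reduce_def using sub by auto
qed

lemma is_reduced_reduce: "finite E \<Longrightarrow> is_reduced (reduce E)"
  unfolding is_reduced_def using reduce_eq_if_cofinal[OF reduce_subset] reduce_covers by blast

lemma is_reducedD: "is_reduced E \<Longrightarrow> X \<in> E \<Longrightarrow> Y \<in> E \<Longrightarrow> X \<subseteq> Y \<Longrightarrow> X = Y"
  unfolding is_reduced_def by (metis reduce_maximal)

lemma is_reduced_Diff: "is_reduced E \<Longrightarrow> is_reduced (E - F)"
  unfolding is_reduced_def reduce_def by blast

lemma induce_iff: "Y \<in> induce W E \<longleftrightarrow> Y \<noteq> {} \<and> (\<exists>X\<in>E. Y = X \<inter> W)"
  unfolding induce_def by blast

lemma induce_subset: "X \<in> induce W E \<Longrightarrow> X \<subseteq> W"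
  unfolding induce_iff by blast

lemma reduce_induceE:
  assumes "M \<in> reduce (induce W E)"
  obtains X where "X \<in> E" "M = X \<inter> W" "M \<noteq> {}"
proof -
  have "M \<in> induce W E" using assms reduce_subset by blast
  then show ?thesis using that unfolding induce_iff by blast
qed

lemma reduce_induce_subset: "X \<in> reduce (induce W E) \<Longrightarrow> X \<subseteq> W"
  using induce_subset reduce_subset by blast

lemma empty_notin_reduce_induce: "{} \<notin> reduce (induce W E)"
  using reduce_subset unfolding induce_def by blast

lemma finite_induce: "finite E \<Longrightarrow> finite (induce W E)"
  unfolding induce_def by simp

lemma induce_eq_self:
  assumes "\<forall>X\<in>E. X \<subseteq> W" "{} \<notin> E"
  shows "induce W E = E"
proof -
  have "{X \<inter> W |X. X \<in> E} = (\<lambda>X. X \<inter> W) ` E" by blast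
  also have "\<dots> = E" using assms(1) by (simp add: Int_absorb2)
  finally show ?thesis unfolding induce_def using assms(2) by simp
qed

lemma induce_Int_vertices: "\<forall>X\<in>E. X \<subseteq> V \<Longrightarrow> induce W E = induce (W \<inter> V) E"
  unfolding induce_def by blast

lemma reduce_induce_reduce_induce:
  assumes "finite E" "W' \<subseteq> W"
  shows "reduce (induce W' (reduce (induce W E))) = reduce (induce W' E)"
proof (rule reduce_eq_if_cofinal)
  show "induce W' (reduce (induce W E)) \<subseteq> induce W' E"
  proof
    fix Y assume "Y \<in> induce W' (reduce (induce W E))"
    then obtain M where "M \<in> induce W E" "Y = M \<inter> W'" "Y \<noteq> {}"
      unfolding induce_iff[of Y W'] using reduce_subset by blast
    then show "Y \<in> induce W' E" using assms(2) unfolding induce_iff by blast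
  qed
  show "\<forall>Y\<in>induce W' E. \<exists>Y'\<in>induce W' (reduce (induce W E)). Y \<subseteq> Y'"
  proof
    fix Y assume "Y \<in> induce W' E"
    then obtain X where X: "X \<in> E" "Y = X \<inter> W'" "Y \<noteq> {}" unfolding induce_iff by blast
    then have "X \<inter> W \<in> induce W E" using assms(2) unfolding induce_iff by blast
    then obtain M where M: "M \<in> reduce (induce W E)" "X \<inter> W \<subseteq> M"
      using reduce_covers[OF finite_induce[OF assms(1)]] by blast
    have "Y \<subseteq> M \<inter> W'" using X(2) M(2) assms(2) by blast
    moreover have "M \<inter> W' \<in> induce W' (reduce (induce W E))"
      using M(1) calculation X(3) unfolding induce_iff by blast
    ultimately show "\<exists>Y'\<in>induce W' (reduce (induce W E)). Y \<subseteq> Y'" by blast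
  qed
qed

lemma reduce_induce_Union:
  assumes "finite E"
  shows "reduce (induce (\<Union>(reduce (induce W E))) E) = reduce (induce W E)"
proof -
  let ?F = "reduce (induce W E)"
  have "induce (\<Union>?F) ?F = ?F" using empty_notin_reduce_induce by (intro induce_eq_self) auto
  then have "reduce (induce (\<Union>?F) ?F) = ?F"
    using is_reduced_reduce[OF finite_induce[OF assms]] unfolding is_reduced_def by simp
  moreover have "\<Union>?F \<subseteq> W" using reduce_induce_subset by blast
  ultimately show ?thesis using reduce_induce_reduce_induce[OF assms] by metis
qed

section \<open>Connected components\<close>

definition edge_rel :: "'a set set \<Rightarrow> ('a \<times> 'a) set" where
  "edge_rel E = {(x, y). \<exists>X\<in>E. x \<in> X \<and> y \<in> X}"

lemma edge_relI: "X \<in> E \<Longrightarrow> x \<in> X \<Longrightarrow> y \<in> X \<Longrightarrow> (x, y) \<in> edge_rel E"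
  unfolding edge_rel_def by blast

lemma components_edge_rel: "components U E = U // ((edge_rel E)\<^sup>* \<inter> U \<times> U)"
  unfolding components_def edge_rel_def ..

lemma sym_edge_rel_rtrancl: "sym ((edge_rel E)\<^sup>*)"
  by (rule sym_rtrancl) (auto simp: sym_def edge_rel_def)

lemma edge_rel_rtrancl_closed:
  assumes "(t, u) \<in> (edge_rel E)\<^sup>*" "t \<in> T" "\<forall>X\<in>E. X \<subseteq> T \<or> X \<inter> T = {}"
  shows "u \<in> T"
  using assms(1,2) by induction (use assms(3) in \<open>auto simp: edge_rel_def\<close>)

lemma ncomp_eq_1I:
  assumes "z \<in> U" "\<forall>u\<in>U. (z, u) \<in> (edge_rel E)\<^sup>*"
  shows "ncomp U E = 1"
proof -
  have "((edge_rel E)\<^sup>* \<inter> U \<times> U) `` {x} = U" if "x \<in> U" for x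
  proof -
    have "(x, z) \<in> (edge_rel E)\<^sup>*" using assms(2) that by (meson sym_edge_rel_rtrancl symD)
    then have "(x, u) \<in> (edge_rel E)\<^sup>*" if "u \<in> U" for u
      using assms(2) that by (blast intro: rtrancl_trans)
    then show ?thesis using that by auto
  qed
  then have "components U E = {U}"
    unfolding components_edge_rel quotient_def using assms(1) by auto
  then show ?thesis unfolding ncomp_def by simp
qed

lemma ncomp_ge_2I:
  assumes "finite U" "t \<in> U" "u \<in> U" "t \<in> T" "u \<notin> T"
    and "\<forall>X\<in>E. X \<subseteq> T \<or> X \<inter> T = {}"
  shows "2 \<le> ncomp U E"
proof -
  define R where "R = (edge_rel E)\<^sup>* \<inter> U \<times> U"
  have classes: "R `` {t} \<in> components U E" "R `` {u} \<in> components U E"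
    unfolding components_edge_rel R_def using assms(2,3) by (simp_all add: quotientI)
  have "(t, u) \<notin> (edge_rel E)\<^sup>*"
  proof
    assume "(t, u) \<in> (edge_rel E)\<^sup>*"
    then have "u \<in> T" using assms(4,6) by (rule edge_rel_rtrancl_closed)
    with assms(5) show False by simp
  qed
  then have "u \<notin> R `` {t}" unfolding R_def by simp
  moreover have "u \<in> R `` {u}" using assms(3) unfolding R_def by blast
  ultimately have "card {R `` {t}, R `` {u}} = 2" by (metis card_2_iff)
  moreover have "finite (components U E)"
    unfolding components_edge_rel using assms(1) by (simp add: finite_quotient)
  ultimately show ?thesis
    unfolding ncomp_def using classes by (metis card_mono empty_subsetI insert_subsetI)
qed

section \<open>Ears and articulation sets\<close>

definition ear :: "'a set set \<Rightarrow> 'a set \<Rightarrow> bool" where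
  "ear F A \<longleftrightarrow> A \<in> F \<and> (F = {A} \<or> (\<exists>C\<in>F. C \<noteq> A \<and> (\<forall>B\<in>F. B \<noteq> A \<longrightarrow> A \<inter> B \<subseteq> C)))"

definition two_ears :: "'a set set \<Rightarrow> bool" where
  "two_ears F \<longleftrightarrow> (2 \<le> card F \<longrightarrow> (\<forall>Z\<in>F. \<exists>A. ear F A \<and> A \<noteq> Z))"

definition hereditary_two_ears :: "'a set set \<Rightarrow> bool" where
  "hereditary_two_ears E \<longleftrightarrow> (\<forall>W. two_ears (reduce (induce W E)))"

lemma earI: "A \<in> F \<Longrightarrow> C \<in> F \<Longrightarrow> C \<noteq> A \<Longrightarrow> \<forall>B\<in>F. B \<noteq> A \<longrightarrow> A \<inter> B \<subseteq> C \<Longrightarrow> ear F A"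
  unfolding ear_def by blast

lemma ear_in: "ear F A \<Longrightarrow> A \<in> F"
  unfolding ear_def by blast

lemma ear_witness:
  "ear F A \<Longrightarrow> F \<noteq> {A} \<Longrightarrow> \<exists>C\<in>F. C \<noteq> A \<and> (\<forall>B\<in>F. B \<noteq> A \<longrightarrow> A \<inter> B \<subseteq> C)"
  unfolding ear_def by blast

lemma ear_witness_Union: "ear F A \<Longrightarrow> F \<noteq> {A} \<Longrightarrow> \<exists>C\<in>F - {A}. A \<inter> \<Union>(F - {A}) \<subseteq> C"
  unfolding ear_def by blast

lemma two_ears_card_le_1: "card F \<le> 1 \<Longrightarrow> two_ears F"
  unfolding two_ears_def by simp

lemma ear_exists:
  assumes "finite F" "F \<noteq> {}" "two_ears F"
  shows "\<exists>A. ear F A"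
proof (cases "2 \<le> card F")
  case True
  with assms show ?thesis unfolding two_ears_def by blast
next
  case False
  have "0 < card F" using assms(1,2) by (simp add: card_gt_0_iff)
  with False have "card F = 1" by linarith
  then obtain A where "F = {A}" using card_1_singletonE by blast
  then show ?thesis unfolding ear_def by blast
qed

lemma ear_articulation_set:
  assumes "finite W" "\<forall>X\<in>F. X \<subseteq> W" "is_reduced F" "hg_connected W F" "1 < card F" "ear F A"
  shows "\<exists>S. articulation_set W F S"
proof -
  have A: "A \<in> F" using assms(6) by (rule ear_in)
  obtain C where C: "C \<in> F" "C \<noteq> A" "\<forall>B\<in>F. B \<noteq> A \<longrightarrow> A \<inter> B \<subseteq> C"
    using ear_witness[OF assms(6)] assms(5) by fastforce
  obtain t where t: "t \<in> A" "t \<notin> C" using is_reducedD[OF assms(3) A C(1)] C(2) by blast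
  obtain u where u: "u \<in> C" "u \<notin> A" using is_reducedD[OF assms(3) C(1) A] C(2) by blast
  define S where "S = A \<inter> C"
  have split: "\<forall>B\<in>F. B - S \<subseteq> A - S \<or> (B - S) \<inter> (A - S) = {}"
    using C(3) unfolding S_def by blast
  have "S \<noteq> {}"
  proof
    assume "S = {}"
    then have "2 \<le> ncomp W F"
      using ncomp_ge_2I[of W t u A F] assms(1,2) split t u A C(1) by auto
    then show False using assms(4) unfolding hg_connected_def by simp
  qed
  let ?G = "reduce (induce (W - S) F)"
  have "\<forall>M\<in>?G. M \<subseteq> A - S \<or> M \<inter> (A - S) = {}"
  proof
    fix M assume "M \<in> ?G"
    then obtain B where "B \<in> F" "M = B \<inter> (W - S)" by (rule reduce_induceE)
    then show "M \<subseteq> A - S \<or> M \<inter> (A - S) = {}" using split by blast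
  qed
  then have "2 \<le> ncomp (W - S) ?G"
    using ncomp_ge_2I[of "W - S" t u "A - S" ?G] assms(1,2) t u A C(1) S_def by auto
  then have "ncomp (W - S) ?G > ncomp W F"
    using assms(4) unfolding hg_connected_def by simp
  then have "articulation_set W F S"
    unfolding articulation_set_def S_def using A C(1,2) \<open>S \<noteq> {}\<close> S_def by blast
  then show ?thesis by blast
qed

lemma acyclic_reduced_if_hereditary_two_ears:
  assumes "finite V" "finite E" "hereditary_two_ears E"
  shows "acyclic_reduced V E"
  unfolding acyclic_reduced_def
proof (intro allI impI)
  fix W assume W: "W \<subseteq> V"
    and con: "hg_connected W (reduce (induce W E)) \<and> 1 < card (reduce (induce W E))"
  let ?F = "reduce (induce W E)"
  have "finite (induce W E)" using assms(2) by (rule finite_induce)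
  then have "finite ?F" "is_reduced ?F" using reduce_subset finite_subset is_reduced_reduce by blast+
  moreover have "\<forall>X\<in>?F. X \<subseteq> W" using reduce_induce_subset by blast
  moreover obtain A where "ear ?F A"
    using ear_exists \<open>finite ?F\<close> con assms(3) unfolding hereditary_two_ears_def by fastforce
  ultimately show "\<exists>S. articulation_set W ?F S"
    using ear_articulation_set W assms(1) con finite_subset by metis
qed

section \<open>Acyclic hypergraphs are hereditarily two-eared\<close>

text \<open>The empty separator covers the disconnected case.\<close>

definition separator :: "'a set set \<Rightarrow> 'a set \<Rightarrow> bool" where
  "separator F S \<longleftrightarrow> S = {} \<or> (\<exists>X\<in>F. \<exists>Y\<in>F. X \<noteq> Y \<and> S = X \<inter> Y)"

lemma separator_subset_Union: "separator F S \<Longrightarrow> S \<subseteq> \<Union>F"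
  unfolding separator_def by blast

lemma separator_Diff_nonempty:
  assumes "is_reduced F" "{} \<notin> F" "separator F S" "Z \<in> F"
  shows "Z - S \<noteq> {}"
proof
  assume Z: "Z - S = {}"
  show False
  proof (cases "S = {}")
    case True
    with Z assms(2,4) show False by simp
  next
    case False
    then obtain X Y where XY: "X \<in> F" "Y \<in> F" "X \<noteq> Y" "S = X \<inter> Y"
      using assms(3) unfolding separator_def by blast
    then have "Z = X" "Z = Y" using Z is_reducedD[OF assms(1) assms(4)] by blast+
    with XY(3) show False by simp
  qed
qed

lemma separator_covered:
  assumes "separator F S" "A \<in> F" "Z \<in> F" "Z \<noteq> A"
  shows "\<exists>C\<in>F. C \<noteq> A \<and> S \<subseteq> C"
  using assms unfolding separator_def by blast

lemma exists_separated_block: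
  assumes "finite F" "\<forall>Z\<in>F. Z \<subseteq> U" "Z0 \<in> F" "z \<in> Z0 - S"
    and "ncomp (U - S) (reduce (induce (U - S) F)) \<noteq> 1"
  obtains D where "D \<subseteq> U - S" "\<forall>Z\<in>F. Z - S \<subseteq> D \<or> (Z - S) \<inter> D = {}"
    "(Z0 - S) \<inter> D = {}" "D \<noteq> {}"
proof -
  let ?G = "reduce (induce (U - S) F)"
  have z: "z \<in> U - S" using assms(2-4) by blast
  then obtain d where d: "d \<in> U - S" "(z, d) \<notin> (edge_rel ?G)\<^sup>*"
    using ncomp_eq_1I[of z "U - S" ?G] assms(5) by blast
  define D where "D = {v \<in> U - S. (d, v) \<in> (edge_rel ?G)\<^sup>*}"
  have block: "Z - S \<subseteq> D \<or> (Z - S) \<inter> D = {}" if Z: "Z \<in> F" for Z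
  proof (rule disjCI)
    assume "(Z - S) \<inter> D \<noteq> {}"
    then obtain v where v: "v \<in> Z - S" "(d, v) \<in> (edge_rel ?G)\<^sup>*" unfolding D_def by blast
    have "Z \<inter> (U - S) \<in> induce (U - S) F" using Z v(1) assms(2) unfolding induce_iff by blast
    then obtain M where M: "M \<in> ?G" "Z \<inter> (U - S) \<subseteq> M"
      using reduce_covers[OF finite_induce[OF assms(1)]] by blast
    show "Z - S \<subseteq> D"
    proof
      fix w assume w: "w \<in> Z - S"
      have ZU: "Z - S = Z \<inter> (U - S)" using assms(2) Z by blast
      then have "(v, w) \<in> edge_rel ?G" using M v(1) w by (blast intro: edge_relI)
      with v(2) have "(d, w) \<in> (edge_rel ?G)\<^sup>*" by (rule rtrancl_into_rtrancl)
      then show "w \<in> D" unfolding D_def using w ZU by blast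
    qed
  qed
  have "(Z0 - S) \<inter> D = {}"
  proof (rule ccontr)
    assume "(Z0 - S) \<inter> D \<noteq> {}"
    then have "z \<in> D" using block[OF assms(3)] assms(4) by blast
    then have "(d, z) \<in> (edge_rel ?G)\<^sup>*" unfolding D_def by simp
    then show False using d(2) by (meson sym_edge_rel_rtrancl symD)
  qed
  moreover have "d \<in> D" unfolding D_def using d(1) by simp
  ultimately show ?thesis using that[of D] block unfolding D_def by blast
qed

lemma block_edges_in_reduce_induce:
  assumes "{} \<notin> F" "is_reduced F" "Z \<in> F" "Z - S \<subseteq> D"
  shows "Z \<in> reduce (induce (D \<union> S) F)"
proof -
  have ZI: "Z \<in> induce (D \<union> S) F"
    using assms(1,3,4) unfolding induce_iff by (metis Diff_subset_conv Int_absorb2 Un_commute)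
  have "\<not> Z \<subset> M" if M: "M \<in> induce (D \<union> S) F" for M
  proof
    assume "Z \<subset> M"
    obtain Z' where "Z' \<in> F" "M = Z' \<inter> (D \<union> S)" using M unfolding induce_iff by blast
    with \<open>Z \<subset> M\<close> is_reducedD[OF assms(2) assms(3)] show False by blast
  qed
  with ZI show ?thesis unfolding reduce_def by blast
qed

lemma reduce_induce_block_cases:
  assumes "separator F S" "\<forall>Z\<in>F. Z - S \<subseteq> D \<or> (Z - S) \<inter> D = {}"
    and "M \<in> reduce (induce (D \<union> S) F)"
  shows "M = S \<or> M \<in> {Z \<in> F. Z - S \<subseteq> D}"
proof -
  obtain Z where Z: "Z \<in> F" "M = Z \<inter> (D \<union> S)" "M \<noteq> {}"
    using assms(3) by (rule reduce_induceE)
  show ?thesis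
  proof (cases "Z - S \<subseteq> D")
    case True
    then have "M = Z" using Z(2) by blast
    with True Z(1) show ?thesis by simp
  next
    case False
    then have MS: "M \<subseteq> S" using assms(2) Z(1,2) by blast
    then obtain X Y where XY: "X \<in> F" "S = X \<inter> Y"
      using assms(1) Z(3) unfolding separator_def by blast
    then have "X \<inter> (D \<union> S) \<in> induce (D \<union> S) F" "M \<subseteq> X \<inter> (D \<union> S)"
      using MS Z(3) unfolding induce_iff by blast+
    then have "M = X \<inter> (D \<union> S)" using assms(3) reduce_maximal by blast
    then show ?thesis using MS XY(2) by blast
  qed
qed

lemma separator_below_reduce_induce_block:
  assumes "finite F" "{} \<notin> F" "is_reduced F" "separator F S" "Z \<in> F" "Z - S \<subseteq> D"
  obtains Z1 where "Z1 \<in> reduce (induce (D \<union> S) F)" "S \<subseteq> Z1"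
proof (cases "S = {}")
  case True
  then show ?thesis using that block_edges_in_reduce_induce[OF assms(2,3,5,6)] by blast
next
  case False
  then obtain X where X: "X \<in> F" "S \<subseteq> X" using assms(4) unfolding separator_def by blast
  then have "X \<inter> (D \<union> S) \<in> induce (D \<union> S) F" using False unfolding induce_iff by blast
  then obtain M where "M \<in> reduce (induce (D \<union> S) F)" "X \<inter> (D \<union> S) \<subseteq> M"
    using reduce_covers[OF finite_induce[OF assms(1)]] by blast
  then show ?thesis using that X(2) by blast
qed

text \<open>\<open>K\<close> is the witness of an ear found inside the block, possibly \<open>S\<close> itself.\<close>

lemma ear_from_block:
  assumes sep: "separator F S" and block: "\<forall>Z\<in>F. Z - S \<subseteq> D \<or> (Z - S) \<inter> D = {}"
    and A: "A \<in> F" "A - S \<subseteq> D" and Z0: "Z0 \<in> F" "Z0 \<noteq> A"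
    and K: "K = S \<or> K \<in> F" "K \<noteq> A" "\<forall>B\<in>F. B - S \<subseteq> D \<longrightarrow> B \<noteq> A \<longrightarrow> A \<inter> B \<subseteq> K"
      "A \<inter> S \<subseteq> K"
  shows "ear F A"
proof -
  obtain C where C: "C \<in> F" "C \<noteq> A" "K \<subseteq> C"
    using K(1,2) separator_covered[OF sep A(1) Z0] by blast
  have "A \<inter> B \<subseteq> C" if B: "B \<in> F" "B \<noteq> A" for B
  proof (cases "B - S \<subseteq> D")
    case True
    then show ?thesis using K(3) C(3) B by blast
  next
    case False
    then have "A \<inter> B \<subseteq> S" using block B(1) A(2) by blast
    then show ?thesis using K(4) C(3) by blast
  qed
  then show ?thesis using A(1) C(1,2) by (intro earI) auto
qed

lemma ear_avoiding_from_block: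
  assumes fin: "finite F" and ne: "{} \<notin> F" and red: "is_reduced F"
    and Z0: "Z0 \<in> F" and sep: "separator F S"
    and block: "\<forall>Z\<in>F. Z - S \<subseteq> D \<or> (Z - S) \<inter> D = {}"
    and Z0_out: "(Z0 - S) \<inter> D = {}" and inside: "Z \<in> F" "Z - S \<subseteq> D"
    and two: "two_ears (reduce (induce (D \<union> S) F))"
  shows "\<exists>A. ear F A \<and> A \<noteq> Z0"
proof -
  define FD where "FD = reduce (induce (D \<union> S) F)"
  define ZD where "ZD = {Z \<in> F. Z - S \<subseteq> D}"
  have ZD_FD: "ZD \<subseteq> FD"
    unfolding ZD_def FD_def using block_edges_in_reduce_induce[OF ne red] by blast
  have FD_ZD: "M = S \<or> M \<in> ZD" if "M \<in> FD" for M
    using reduce_induce_block_cases[OF sep block] that unfolding FD_def ZD_def by blast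
  have ZD_not: "A \<noteq> Z0" "A \<noteq> S" if "A \<in> ZD" for A
    using that separator_Diff_nonempty[OF red ne sep] Z0 Z0_out unfolding ZD_def by blast+
  have ear_if: "ear F A" if "A \<in> ZD" "K = S \<or> K \<in> F" "K \<noteq> A"
    "\<forall>B\<in>ZD. B \<noteq> A \<longrightarrow> A \<inter> B \<subseteq> K" "A \<inter> S \<subseteq> K" for A K
    using ear_from_block[OF sep block _ _ Z0 ZD_not(1)[symmetric], of A K] that
    unfolding ZD_def by blast
  obtain Z1 where Z1: "Z1 \<in> FD" "S \<subseteq> Z1"
    using separator_below_reduce_induce_block[OF fin ne red sep inside] unfolding FD_def by blast
  show ?thesis
  proof (cases "2 \<le> card FD")
    case True
    then obtain A where A: "ear FD A" "A \<noteq> Z1"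
      using two Z1(1) unfolding two_ears_def FD_def by blast
    have "FD \<noteq> {A}" using True by auto
    then obtain C where C: "C \<in> FD" "C \<noteq> A" "\<forall>B\<in>FD. B \<noteq> A \<longrightarrow> A \<inter> B \<subseteq> C"
      using ear_witness[OF A(1)] by blast
    have "A \<noteq> S"
      using reduce_maximal[of A _ Z1] ear_in[OF A(1)] Z1 A(2) reduce_subset unfolding FD_def by blast
    then have AZD: "A \<in> ZD" using FD_ZD ear_in[OF A(1)] by blast
    moreover have "C = S \<or> C \<in> F" using FD_ZD[OF C(1)] unfolding ZD_def by blast
    moreover have "\<forall>B\<in>ZD. B \<noteq> A \<longrightarrow> A \<inter> B \<subseteq> C" using C(3) ZD_FD by blast
    moreover have "A \<inter> S \<subseteq> C" using C(3) Z1 A(2) by blast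
    ultimately have "ear F A" using ear_if C(2) by blast
    then show ?thesis using ZD_not(1)[OF AZD] by blast
  next
    case False
    have "finite FD" unfolding FD_def using finite_induce[OF fin] reduce_subset finite_subset by blast
    then have "card FD \<noteq> 0" using Z1(1) by auto
    with False have "card FD = 1" by linarith
    then obtain A where "FD = {A}" by (rule card_1_singletonE)
    moreover have "ZD \<noteq> {}" using inside unfolding ZD_def by blast
    ultimately have ZD: "ZD = {A}" using ZD_FD by blast
    then have "ear F A" using ear_if[of A S] ZD_not(2) by blast
    then show ?thesis using ZD_not(1) ZD by blast
  qed
qed

lemma two_ears_if_hereditary_below:
  assumes fin: "finite F" "finite (\<Union>F)" and ne: "{} \<notin> F" and red: "is_reduced F"
    and below: "\<And>W. W \<subset> \<Union>F \<Longrightarrow> two_ears (reduce (induce W F))"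
    and art: "hg_connected (\<Union>F) F \<Longrightarrow> 1 < card F \<Longrightarrow> \<exists>S. articulation_set (\<Union>F) F S"
  shows "two_ears F"
  unfolding two_ears_def
proof (intro impI ballI)
  fix Z0 assume card: "2 \<le> card F" and Z0: "Z0 \<in> F"
  let ?U = "\<Union>F"
  obtain S where sep: "separator F S"
    and disconnected: "ncomp (?U - S) (reduce (induce (?U - S) F)) \<noteq> 1"
  proof (cases "hg_connected ?U F")
    case True
    then obtain S where "articulation_set ?U F S" using art card by auto
    then obtain X Y where "X \<in> F" "Y \<in> F" "X \<noteq> Y" "S = X \<inter> Y"
      and more: "ncomp (?U - S) (reduce (induce (?U - S) F)) > ncomp ?U F"
      unfolding articulation_set_def by blast
    then have "separator F S" unfolding separator_def by blast
    moreover have "ncomp (?U - S) (reduce (induce (?U - S) F)) \<noteq> 1"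
      using more True unfolding hg_connected_def by simp
    ultimately show thesis by (rule that)
  next
    case False
    have "induce ?U F = F" using ne by (intro induce_eq_self) auto
    then have "reduce (induce (?U - {}) F) = F" using red unfolding is_reduced_def by simp
    then show thesis using that[of "{}"] False unfolding separator_def hg_connected_def by simp
  qed
  obtain z where z: "z \<in> Z0 - S" using separator_Diff_nonempty[OF red ne sep Z0] by blast
  obtain D where D: "D \<subseteq> ?U - S" "\<forall>Z\<in>F. Z - S \<subseteq> D \<or> (Z - S) \<inter> D = {}"
      "(Z0 - S) \<inter> D = {}" "D \<noteq> {}"
    using exists_separated_block[OF fin(1) _ Z0 z disconnected] by blast
  have "D \<union> S \<subset> ?U"
    using D(1,3) z Z0 separator_subset_Union[OF sep] by blast
  then have two: "two_ears (reduce (induce (D \<union> S) F))" by (rule below)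
  obtain d Z where "d \<in> D" "Z \<in> F" "d \<in> Z" using D(1,4) by blast
  then have inside: "Z - S \<subseteq> D" using D(1,2) by blast
  show "\<exists>A. ear F A \<and> A \<noteq> Z0"
    using ear_avoiding_from_block[OF fin(1) ne red Z0 sep D(2,3) \<open>Z \<in> F\<close> inside two] .
qed

lemma hereditary_two_ears_if_acyclic_reduced:
  assumes "finite V" "\<forall>X\<in>E. X \<subseteq> V" "finite E" "acyclic_reduced V E"
  shows "hereditary_two_ears E"
proof -
  have "two_ears (reduce (induce W E))" if "W \<subseteq> V" for W
    using that
  proof (induction "card W" arbitrary: W rule: less_induct)
    case less
    define F where "F = reduce (induce W E)"
    have "finite W" using less.prems assms(1) finite_subset by blast
    have UF: "\<Union>F \<subseteq> W" unfolding F_def using reduce_induce_subset by blast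
    have nested: "reduce (induce W' F) = reduce (induce W' E)" if "W' \<subseteq> W" for W'
      unfolding F_def using assms(3) that by (rule reduce_induce_reduce_induce)
    show ?case
      unfolding F_def[symmetric]
    proof (rule two_ears_if_hereditary_below)
      show "finite F" unfolding F_def using finite_induce[OF assms(3)] reduce_subset finite_subset by blast
      show "finite (\<Union>F)" using UF \<open>finite W\<close> finite_subset by blast
      show "{} \<notin> F" unfolding F_def by (rule empty_notin_reduce_induce)
      show "is_reduced F" unfolding F_def using finite_induce[OF assms(3)] by (rule is_reduced_reduce)
    next
      fix W' assume "W' \<subset> \<Union>F"
      then have "W' \<subset> W" using UF by blast
      then have "two_ears (reduce (induce W' E))"
        using less.hyps less.prems psubset_card_mono[OF \<open>finite W\<close>] by blast
      then show "two_ears (reduce (induce W' F))" using nested \<open>W' \<subset> W\<close> by simp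
    next
      assume "hg_connected (\<Union>F) F" "1 < card F"
      moreover have "reduce (induce (\<Union>F) E) = F"
        unfolding F_def using assms(3) by (rule reduce_induce_Union)
      ultimately show "\<exists>S. articulation_set (\<Union>F) F S"
        using assms(4) UF less.prems unfolding acyclic_reduced_def by (metis order_trans)
    qed
  qed
  then show ?thesis
    unfolding hereditary_two_ears_def using induce_Int_vertices[OF assms(2)] by (metis inf_le2)
qed

section \<open>Downward closures of reduced hypergraphs\<close>

lemma maximal_edge_down_closure:
  assumes "{} \<notin> E" "is_reduced E"
  shows "maximal_edge (down_closure E) X \<longleftrightarrow> X \<in> E"
proof
  assume "maximal_edge (down_closure E) X"
  then have X: "X \<in> down_closure E" "\<not> (\<exists>Y\<in>down_closure E. X \<subset> Y)"
    unfolding maximal_edge_def by auto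
  then obtain Y where Y: "Y \<in> E" "X \<subseteq> Y" unfolding down_closure_def by blast
  then have "Y \<in> down_closure E" using assms(1) unfolding down_closure_def by blast
  with X(2) Y show "X \<in> E" by blast
next
  assume X: "X \<in> E"
  then have "X \<in> down_closure E" using assms(1) unfolding down_closure_def by blast
  moreover have "\<not> X \<subset> Y" if Y: "Y \<in> down_closure E" for Y
  proof
    assume "X \<subset> Y"
    obtain Z where "Z \<in> E" "Y \<subseteq> Z" using Y unfolding down_closure_def by blast
    with \<open>X \<subset> Y\<close> is_reducedD[OF assms(2) X] show False by blast
  qed
  ultimately show "maximal_edge (down_closure E) X" unfolding maximal_edge_def by blast
qed

lemma max_intersection_down_closure:
  assumes "{} \<notin> E" "is_reduced E"
  shows "max_intersection (down_closure E) X Y \<longleftrightarrow>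
    X \<in> E \<and> Y \<in> E \<and> X \<noteq> Y \<and> \<not> (\<exists>Z\<in>E. Z \<noteq> X \<and> Z \<noteq> Y \<and> X \<inter> Y \<subset> X \<inter> Z)"
  unfolding max_intersection_def maximal_edge_down_closure[OF assms] by blast

lemma max_intersection_above:
  assumes "finite E" "{} \<notin> E" "is_reduced E" "X \<in> E" "B \<in> E" "B \<noteq> X"
  obtains Y where "max_intersection (down_closure E) X Y" "X \<inter> B \<subseteq> X \<inter> Y"
proof -
  define T where "T = {Z \<in> E. Z \<noteq> X \<and> X \<inter> B \<subseteq> X \<inter> Z}"
  have "finite ((\<inter>) X ` T)" "X \<inter> B \<in> (\<inter>) X ` T" using assms(1,5,6) unfolding T_def by auto
  then obtain m where m: "m \<in> (\<inter>) X ` T" and max: "\<forall>m'\<in>(\<inter>) X ` T. m \<subseteq> m' \<longrightarrow> m = m'"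
    using finite_has_maximal2 by metis
  then obtain Y where Y: "Y \<in> T" "m = X \<inter> Y" by blast
  have "\<not> (\<exists>Z\<in>E. Z \<noteq> X \<and> Z \<noteq> Y \<and> X \<inter> Y \<subset> X \<inter> Z)"
  proof
    assume "\<exists>Z\<in>E. Z \<noteq> X \<and> Z \<noteq> Y \<and> X \<inter> Y \<subset> X \<inter> Z"
    then obtain Z where Z: "Z \<in> E" "Z \<noteq> X" "X \<inter> Y \<subset> X \<inter> Z" by blast
    then have "Z \<in> T" using Y(1) unfolding T_def by blast
    with max Y(2) Z(3) show False by blast
  qed
  then have "max_intersection (down_closure E) X Y"
    unfolding max_intersection_down_closure[OF assms(2,3)] using assms(4) Y(1) unfolding T_def by blast
  moreover have "X \<inter> B \<subseteq> X \<inter> Y" using Y(1) unfolding T_def by blast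
  ultimately show ?thesis by (rule that)
qed

lemma max_intersection_eq_witness:
  assumes "{} \<notin> E" "is_reduced E" "max_intersection (down_closure E) X Y"
    and "C \<in> E" "C \<noteq> X" "X \<inter> Y \<subseteq> X \<inter> C"
  shows "X \<inter> Y = X \<inter> C"
proof (cases "C = Y")
  case False
  have "\<not> (\<exists>Z\<in>E. Z \<noteq> X \<and> Z \<noteq> Y \<and> X \<inter> Y \<subset> X \<inter> Z)"
    using assms(3) unfolding max_intersection_down_closure[OF assms(1,2)] by simp
  then have "\<not> X \<inter> Y \<subset> X \<inter> C" using assms(4,5) False by meson
  with assms(6) show ?thesis by (simp add: psubset_eq)
qed simp

lemma ear_if_extreme_down_closure:
  assumes "finite E" "{} \<notin> E" "is_reduced E" "extreme (down_closure E) X"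
  shows "ear E X"
proof -
  have X: "X \<in> E" using assms(4) unfolding extreme_def maximal_edge_down_closure[OF assms(2,3)] by blast
  show ?thesis
  proof (cases "E = {X}")
    case True
    then show ?thesis unfolding ear_def by blast
  next
    case False
    then obtain B0 where "B0 \<in> E" "B0 \<noteq> X" using X by blast
    then obtain Y0 where Y0: "max_intersection (down_closure E) X Y0"
      using max_intersection_above[OF assms(1-3) X] by blast
    have "X \<inter> B \<subseteq> Y0" if B: "B \<in> E" "B \<noteq> X" for B
    proof -
      obtain Y where "max_intersection (down_closure E) X Y" "X \<inter> B \<subseteq> X \<inter> Y"
        using max_intersection_above[OF assms(1-3) X B] by blast
      with assms(4) Y0 show ?thesis unfolding extreme_def by blast
    qed
    moreover have "Y0 \<in> E" "Y0 \<noteq> X" using Y0 unfolding max_intersection_down_closure[OF assms(2,3)] by auto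
    ultimately show ?thesis using X by (intro earI) auto
  qed
qed

lemma extreme_down_closure_if_ear:
  assumes "{} \<notin> E" "is_reduced E" "ear E X"
  shows "extreme (down_closure E) X"
proof -
  have eq_witness: "X \<inter> Y = X \<inter> C"
    if Y: "max_intersection (down_closure E) X Y"
      and C: "C \<in> E" "C \<noteq> X" "\<forall>B\<in>E. B \<noteq> X \<longrightarrow> X \<inter> B \<subseteq> C" for Y C
  proof -
    have "Y \<in> E" "Y \<noteq> X" using Y unfolding max_intersection_down_closure[OF assms(1,2)] by auto
    then have "X \<inter> Y \<subseteq> X \<inter> C" using C(3) by blast
    then show ?thesis by (rule max_intersection_eq_witness[OF assms(1,2) Y C(1,2)])
  qed
  have "X \<inter> Y = X \<inter> Y'"
    if Y: "max_intersection (down_closure E) X Y" "max_intersection (down_closure E) X Y'" for Y Y'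
  proof -
    have "Y \<in> E" "Y \<noteq> X" using Y(1) unfolding max_intersection_down_closure[OF assms(1,2)] by auto
    then have "E \<noteq> {X}" by blast
    then obtain C where "C \<in> E" "C \<noteq> X" "\<forall>B\<in>E. B \<noteq> X \<longrightarrow> X \<inter> B \<subseteq> C"
      using ear_witness[OF assms(3)] by blast
    with eq_witness Y show ?thesis by metis
  qed
  moreover have "maximal_edge (down_closure E) X"
    using ear_in[OF assms(3)] maximal_edge_down_closure[OF assms(1,2)] by blast
  ultimately show ?thesis unfolding extreme_def by blast
qed

lemma proper_vertices_down_closure:
  assumes "{} \<notin> E" "is_reduced E"
  shows "proper_vertices (down_closure E) X = X - \<Union>(E - {X})"
  unfolding proper_vertices_def maximal_edge_down_closure[OF assms] by blast

lemma normal_subcomplex_down_closure: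
  assumes "{} \<notin> E" "is_reduced E" "ear E X"
  shows "normal_subcomplex (down_closure E) X = down_closure (E - {X})"
proof (rule set_eqI, rule iffI)
  fix Y assume "Y \<in> normal_subcomplex (down_closure E) X"
  then have Y: "Y \<in> down_closure E" and out: "Y \<inter> (X - \<Union>(E - {X})) = {}"
    unfolding normal_subcomplex_def proper_vertices_down_closure[OF assms(1,2)] by auto
  then obtain Z where Z: "Z \<in> E" "Y \<subseteq> Z" "Y \<noteq> {}" unfolding down_closure_def by blast
  show "Y \<in> down_closure (E - {X})"
  proof (cases "Z = X")
    case False
    then show ?thesis using Z unfolding down_closure_def by blast
  next
    case True
    then have YU: "Y \<subseteq> X \<inter> \<Union>(E - {X})" using Z(2) out by blast
    then have "E \<noteq> {X}" using Z(3) by auto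
    then obtain C where C: "C \<in> E - {X}" "X \<inter> \<Union>(E - {X}) \<subseteq> C"
      using ear_witness_Union[OF assms(3)] by blast
    then have "Y \<subseteq> C" using YU by blast
    with C(1) Z(3) show ?thesis unfolding down_closure_def by blast
  qed
next
  fix Y assume "Y \<in> down_closure (E - {X})"
  then obtain Z where Z: "Z \<in> E - {X}" "Y \<subseteq> Z" "Y \<noteq> {}" unfolding down_closure_def by blast
  then have "Y \<in> down_closure E" unfolding down_closure_def by blast
  moreover have "Y \<inter> (X - \<Union>(E - {X})) = {}" using Z by blast
  ultimately show "Y \<in> normal_subcomplex (down_closure E) X"
    unfolding normal_subcomplex_def proper_vertices_down_closure[OF assms(1,2)] by blast
qed

lemma down_closure_Diff_psubset:
  assumes "{} \<notin> E" "is_reduced E" "X \<in> E"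
  shows "down_closure (E - {X}) \<subset> down_closure E"
proof -
  have "X \<notin> down_closure (E - {X})"
    using is_reducedD[OF assms(2,3)] unfolding down_closure_def by blast
  moreover have "X \<in> down_closure E" using assms(1,3) unfolding down_closure_def by blast
  ultimately show ?thesis unfolding down_closure_def by blast
qed

lemma down_closure_reduce: "finite E \<Longrightarrow> down_closure (reduce E) = down_closure E"
  unfolding down_closure_def using reduce_subset reduce_covers by (metis (lifting) subset_trans subsetD)

section \<open>Removing and adding ears\<close>

lemma reduce_induce_remove_ear:
  assumes "ear E X"
  shows "reduce (induce W (E - {X})) = reduce (induce (W - (X - \<Union>(E - {X}))) E)"
proof -
  define P where "P = X - \<Union>(E - {X})"
  have "Z \<inter> W = Z \<inter> (W - P)" if "Z \<in> E - {X}" for Z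
    using that unfolding P_def by blast
  then have "induce W (E - {X}) = induce (W - P) (E - {X})"
    unfolding induce_def by (metis (no_types, lifting))
  also have "reduce \<dots> = reduce (induce (W - P) E)"
  proof (rule reduce_eq_if_cofinal)
    show "induce (W - P) (E - {X}) \<subseteq> induce (W - P) E" unfolding induce_def by blast
    show "\<forall>Y\<in>induce (W - P) E. \<exists>Y'\<in>induce (W - P) (E - {X}). Y \<subseteq> Y'"
    proof
      fix Y assume "Y \<in> induce (W - P) E"
      then obtain Z where Z: "Z \<in> E" "Y = Z \<inter> (W - P)" "Y \<noteq> {}" unfolding induce_iff by blast
      show "\<exists>Y'\<in>induce (W - P) (E - {X}). Y \<subseteq> Y'"
      proof (cases "Z = X")
        case False
        then have "Y \<in> induce (W - P) (E - {X})" using Z unfolding induce_iff by blast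
        then show ?thesis by blast
      next
        case True
        then have YU: "Y \<subseteq> X \<inter> \<Union>(E - {X})" "Y \<subseteq> W - P" using Z(2) unfolding P_def by blast+
        then have "E \<noteq> {X}" using Z(3) by auto
        then obtain C where C: "C \<in> E - {X}" "X \<inter> \<Union>(E - {X}) \<subseteq> C"
          using ear_witness_Union[OF assms] by blast
        then have "Y \<subseteq> C \<inter> (W - P)" using YU by blast
        moreover from this have "C \<inter> (W - P) \<in> induce (W - P) (E - {X})"
          using C(1) Z(3) unfolding induce_iff by blast
        ultimately show ?thesis by blast
      qed
    qed
  qed
  finally show ?thesis unfolding P_def .
qed

lemma hereditary_two_ears_remove_ear:
  assumes "hereditary_two_ears E" "ear E X"
  shows "hereditary_two_ears (E - {X})"
  using assms reduce_induce_remove_ear unfolding hereditary_two_ears_def by metis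

lemma two_ears_insert:
  assumes "finite F" "two_ears F" "A \<notin> F" "C0 \<in> F" "\<forall>B\<in>F. A \<inter> B \<subseteq> C0"
  shows "two_ears (insert A F)"
  unfolding two_ears_def
proof (intro impI ballI)
  fix Z assume Z: "Z \<in> insert A F"
  have "ear (insert A F) A" using assms(3-5) by (intro earI[of _ _ C0]) auto
  show "\<exists>E. ear (insert A F) E \<and> E \<noteq> Z"
  proof (cases "Z = A")
    case False
    with \<open>ear (insert A F) A\<close> show ?thesis by blast
  next
    case True
    show ?thesis
    proof (cases "F = {C0}")
      case True
      have "ear (insert A F) C0" using True assms(3,4) by (intro earI[of _ _ A]) auto
      then show ?thesis using \<open>Z = A\<close> assms(3,4) by blast
    next
      case False
      then obtain B where "B \<in> F" "B \<noteq> C0" using assms(4) by blast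
      then have "2 \<le> card F" using card_le_Suc0_iff_eq[OF assms(1)] assms(4) by fastforce
      then obtain E where E: "ear F E" "E \<noteq> C0" using assms(2,4) unfolding two_ears_def by blast
      then have "F \<noteq> {E}" using assms(4) by blast
      then obtain D where D: "D \<in> F" "D \<noteq> E" "\<forall>B\<in>F. B \<noteq> E \<longrightarrow> E \<inter> B \<subseteq> D"
        using ear_witness[OF E(1)] by blast
      have "E \<inter> A \<subseteq> D" using assms(4,5) ear_in[OF E(1)] D(3) E(2) by blast
      then have "ear (insert A F) E" using D ear_in[OF E(1)] by (intro earI[of _ _ D]) auto
      then show ?thesis using \<open>Z = A\<close> ear_in[OF E(1)] assms(3) by blast
    qed
  qed
qed

lemma two_ears_insert_replace:
  assumes "finite F" "two_ears F" "A \<notin> F" "C0 \<in> F" "C0 \<subseteq> A" "\<forall>B\<in>F. A \<inter> B \<subseteq> C0"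
  shows "two_ears (insert A (F - {C0}))"
  unfolding two_ears_def
proof (intro impI ballI)
  let ?F = "insert A (F - {C0})"
  fix Z assume card: "2 \<le> card ?F" and Z: "Z \<in> ?F"
  have "0 < card F" using assms(1,4) by (auto simp: card_gt_0_iff)
  then have "card ?F = card F" using assms(1,3,4) by (simp add: card_insert_disjoint card_Diff_singleton)
  define Z' where "Z' = (if Z = A then C0 else Z)"
  have "Z' \<in> F" using Z assms(4) unfolding Z'_def by auto
  then obtain E where E: "ear F E" "E \<noteq> Z'"
    using assms(2) card \<open>card ?F = card F\<close> unfolding two_ears_def by auto
  have EF: "E \<in> F" using E(1) by (rule ear_in)
  have "F \<noteq> {E}" using card \<open>card ?F = card F\<close> by auto
  then obtain D where D: "D \<in> F" "D \<noteq> E" "\<forall>B\<in>F. B \<noteq> E \<longrightarrow> E \<inter> B \<subseteq> D"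
    using ear_witness[OF E(1)] by blast
  show "\<exists>E'. ear ?F E' \<and> E' \<noteq> Z"
  proof (cases "E = C0")
    case True
    have "A \<inter> B \<subseteq> D" if "B \<in> F - {C0}" for B
      using that assms(6) D(3) True by blast
    then have "ear ?F A" using D(1,2) True assms(3) by (intro earI[of _ _ D]) auto
    moreover have "A \<noteq> Z" using E(2) True unfolding Z'_def by auto
    ultimately show ?thesis by blast
  next
    case False
    define D' where "D' = (if D = C0 then A else D)"
    have "D \<subseteq> D'" unfolding D'_def using assms(5) by simp
    moreover have "E \<inter> A \<subseteq> D" using assms(6) EF D(3) False assms(4) by blast
    ultimately have "E \<inter> B \<subseteq> D'" if "B \<in> ?F" "B \<noteq> E" for B
      using that D(3) by blast
    moreover have "D' \<in> ?F" "D' \<noteq> E" unfolding D'_def using D(1,2) EF assms(3) by auto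
    ultimately have "ear ?F E" using EF False by (intro earI[of _ _ D']) auto
    moreover have "E \<noteq> Z" using E(2) EF assms(3) unfolding Z'_def by (cases "Z = A") auto
    ultimately show ?thesis by blast
  qed
qed

lemma reduce_insert:
  assumes "is_reduced F" "\<forall>B\<in>F. \<not> A \<subseteq> B"
  shows "reduce (insert A F) = insert A {B \<in> F. \<not> B \<subset> A}"
proof (rule set_eqI)
  fix M
  have "\<not> M \<subset> B" if "M \<in> F" "B \<in> F" for B
    using is_reducedD[OF assms(1) that] by blast
  then show "M \<in> reduce (insert A F) \<longleftrightarrow> M \<in> insert A {B \<in> F. \<not> B \<subset> A}"
    unfolding reduce_def using assms(2) by auto
qed

lemma two_ears_reduce_insert:
  assumes "finite F" "is_reduced F" "two_ears F" "C0 \<in> F" "\<forall>B\<in>F. A \<inter> B \<subseteq> C0"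
  shows "two_ears (reduce (insert A F))"
proof (cases "\<exists>B\<in>F. A \<subseteq> B")
  case True
  then have "reduce F = reduce (insert A F)" by (intro reduce_eq_if_cofinal) auto
  then show ?thesis using assms(2,3) unfolding is_reduced_def by simp
next
  case False
  then have AF: "A \<notin> F" by blast
  have small: "B = C0" if "B \<in> F" "B \<subset> A" for B
    using that assms(5) is_reducedD[OF assms(2) that(1) assms(4)] by blast
  show ?thesis
  proof (cases "C0 \<subset> A")
    case True
    then have "{B \<in> F. \<not> B \<subset> A} = F - {C0}" using small by blast
    then show ?thesis
      using reduce_insert[OF assms(2)] False True
        two_ears_insert_replace[OF assms(1,3) AF assms(4) _ assms(5)] by auto
  next
    case False
    then have "{B \<in> F. \<not> B \<subset> A} = F" using small by blast
    then show ?thesis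
      using reduce_insert[OF assms(2)] \<open>\<not> (\<exists>B\<in>F. A \<subseteq> B)\<close>
        two_ears_insert[OF assms(1,3) AF assms(4,5)] by auto
  qed
qed

lemma reduce_induce_insert:
  assumes "finite E" "X \<in> E" "X \<inter> W \<noteq> {}"
  shows "reduce (induce W E) = reduce (insert (X \<inter> W) (reduce (induce W (E - {X}))))"
proof (rule reduce_eq_if_cofinal[symmetric])
  have fin: "finite (induce W (E - {X}))" using assms(1) by (simp add: finite_induce)
  show "insert (X \<inter> W) (reduce (induce W (E - {X}))) \<subseteq> induce W E"
    using assms(2,3) reduce_subset unfolding induce_def by blast
  show "\<forall>Y\<in>induce W E. \<exists>Y'\<in>insert (X \<inter> W) (reduce (induce W (E - {X}))). Y \<subseteq> Y'"
  proof
    fix Y assume "Y \<in> induce W E"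
    then obtain Z where Z: "Z \<in> E" "Y = Z \<inter> W" "Y \<noteq> {}" unfolding induce_iff by blast
    show "\<exists>Y'\<in>insert (X \<inter> W) (reduce (induce W (E - {X}))). Y \<subseteq> Y'"
    proof (cases "Z = X")
      case True
      then show ?thesis using Z(2) by blast
    next
      case False
      then have "Y \<in> induce W (E - {X})" using Z unfolding induce_iff by blast
      then show ?thesis using reduce_covers[OF fin] by blast
    qed
  qed
qed

lemma ear_meets_reduce_induce_in_one_edge:
  assumes "finite E" "ear E X" "reduce (induce W (E - {X})) \<noteq> {}"
  obtains C0 where "C0 \<in> reduce (induce W (E - {X}))"
    "\<forall>B\<in>reduce (induce W (E - {X})). X \<inter> W \<inter> B \<subseteq> C0"
proof -
  let ?F = "reduce (induce W (E - {X}))"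
  have "E - {X} \<noteq> {}" using assms(3) unfolding induce_def reduce_def by auto
  then obtain C where C: "C \<in> E - {X}" "X \<inter> \<Union>(E - {X}) \<subseteq> C"
    using ear_witness_Union[OF assms(2)] by blast
  obtain C0 where C0: "C0 \<in> ?F" "C \<inter> W \<subseteq> C0"
  proof (cases "C \<inter> W = {}")
    case True
    then show thesis using that assms(3) by blast
  next
    case False
    then have "C \<inter> W \<in> induce W (E - {X})" using C(1) unfolding induce_iff by blast
    then show thesis using that reduce_covers[OF finite_induce] assms(1) by blast
  qed
  have "\<forall>B\<in>?F. X \<inter> W \<inter> B \<subseteq> C0"
  proof
    fix B assume "B \<in> ?F"
    then obtain Z where "Z \<in> E - {X}" "B = Z \<inter> W" by (rule reduce_induceE)
    then have "X \<inter> W \<inter> B \<subseteq> C \<inter> W" using C(2) by blast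
    then show "X \<inter> W \<inter> B \<subseteq> C0" using C0(2) by blast
  qed
  with C0(1) show ?thesis by (rule that)
qed

lemma hereditary_two_ears_add_ear:
  assumes "finite E" "ear E X" "hereditary_two_ears (E - {X})"
  shows "hereditary_two_ears E"
  unfolding hereditary_two_ears_def
proof
  fix W
  define F where "F = reduce (induce W (E - {X}))"
  have fin: "finite (induce W (E - {X}))" using assms(1) by (simp add: finite_induce)
  then have "finite F" "is_reduced F" unfolding F_def
    using reduce_subset finite_subset is_reduced_reduce by blast+
  have "two_ears F" using assms(3) unfolding F_def hereditary_two_ears_def by blast
  show "two_ears (reduce (induce W E))"
  proof (cases "X \<inter> W = {}")
    case True
    then have "induce W E = induce W (E - {X})" unfolding induce_def by blast
    then show ?thesis using assms(3) unfolding hereditary_two_ears_def by simp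
  next
    case False
    have "two_ears (reduce (insert (X \<inter> W) F))"
    proof (cases "F = {}")
      case True
      have "reduce {X \<inter> W} = {X \<inter> W}" unfolding reduce_def by auto
      with True show ?thesis by (simp add: two_ears_card_le_1)
    next
      case False
      then obtain C0 where "C0 \<in> F" "\<forall>B\<in>F. X \<inter> W \<inter> B \<subseteq> C0"
        using ear_meets_reduce_induce_in_one_edge[OF assms(1,2)] unfolding F_def by blast
      then show ?thesis using two_ears_reduce_insert \<open>finite F\<close> \<open>is_reduced F\<close> \<open>two_ears F\<close> by blast
    qed
    then show ?thesis using reduce_induce_insert[OF assms(1) ear_in[OF assms(2)] False]
      unfolding F_def by simp
  qed
qed

section \<open>Normal series\<close>

lemma normal_series_Suc:
  assumes "extreme K X" "normal_subcomplex K X \<subset> K"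
    and series: "normal_series (normal_subcomplex K X) Ks r"
  shows "normal_series K (case_nat K Ks) (Suc r)"
proof -
  define Ks' where "Ks' = case_nat K Ks"
  have "Ks' (Suc l) \<subset> Ks' l \<and> (\<exists>Y. extreme (Ks' l) Y \<and> Ks' (Suc l) = normal_subcomplex (Ks' l) Y)"
    if "l < Suc r" for l
  proof (cases l)
    case 0
    then show ?thesis using assms unfolding normal_series_def Ks'_def by auto
  next
    case (Suc m)
    then show ?thesis using that series unfolding normal_series_def Ks'_def by auto
  qed
  then show ?thesis using series unfolding normal_series_def Ks'_def[symmetric] by (simp add: Ks'_def)
qed

lemma normal_series_SucE:
  assumes "normal_series K Ks (Suc r)"
  obtains X where "extreme K X" "normal_series (normal_subcomplex K X) (\<lambda>l. Ks (Suc l)) r"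
proof -
  have K: "Ks 0 = K"
    and steps: "\<forall>l<Suc r. Ks (Suc l) \<subset> Ks l \<and>
      (\<exists>X. extreme (Ks l) X \<and> Ks (Suc l) = normal_subcomplex (Ks l) X)"
    and last: "\<not> (\<exists>X. extreme (Ks (Suc r)) X)"
    using assms unfolding normal_series_def by blast+
  obtain X where "extreme K X" "Ks (Suc 0) = normal_subcomplex K X"
    using steps[rule_format, of 0] K by auto
  then show thesis using that steps last unfolding normal_series_def by auto
qed

lemma regular_empty: "regular {}"
  unfolding regular_def normal_series_def extreme_def maximal_edge_def by auto

lemma two_ears_if_hereditary:
  assumes "{} \<notin> E" "is_reduced E" "hereditary_two_ears E"
  shows "two_ears E"
proof -
  have "induce UNIV E = E" using assms(1) by (intro induce_eq_self) auto
  then show ?thesis using assms(2,3) unfolding hereditary_two_ears_def is_reduced_def by metis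
qed

lemma regular_down_closure_if_hereditary_two_ears:
  assumes "finite E" "{} \<notin> E" "is_reduced E" "hereditary_two_ears E"
  shows "regular (down_closure E)"
  using assms
proof (induction "card E" arbitrary: E rule: less_induct)
  case less
  show ?case
  proof (cases "E = {}")
    case True
    then show ?thesis using regular_empty by (simp add: down_closure_def)
  next
    case False
    obtain X where X: "ear E X"
      using ear_exists[OF less.prems(1) False two_ears_if_hereditary[OF less.prems(2-4)]] by blast
    have "regular (down_closure (E - {X}))"
    proof (rule less.hyps)
      show "card (E - {X}) < card E" using less.prems(1) ear_in[OF X] by (rule card_Diff1_less)
      show "hereditary_two_ears (E - {X})" using less.prems(4) X by (rule hereditary_two_ears_remove_ear)
    qed (use less.prems is_reduced_Diff in auto)
    then obtain Ks r where Ks: "normal_series (down_closure (E - {X})) Ks r" "Ks r = {}"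
      unfolding regular_def by blast
    have "normal_series (down_closure E) (case_nat (down_closure E) Ks) (Suc r)"
      using normal_series_Suc extreme_down_closure_if_ear[OF less.prems(2,3) X] Ks(1)
        normal_subcomplex_down_closure[OF less.prems(2,3) X]
        down_closure_Diff_psubset[OF less.prems(2,3) ear_in[OF X]] by metis
    with Ks(2) show ?thesis unfolding regular_def by fastforce
  qed
qed

lemma hereditary_two_ears_if_normal_series:
  assumes "normal_series (down_closure E) Ks r" "Ks r = {}" "finite E" "{} \<notin> E" "is_reduced E"
  shows "hereditary_two_ears E"
  using assms
proof (induction r arbitrary: E Ks)
  case 0
  then have "down_closure E = {}" unfolding normal_series_def by simp
  then have "E = {}" using 0(4) unfolding down_closure_def by blast
  then show ?case
    unfolding hereditary_two_ears_def by (simp add: induce_def reduce_def two_ears_card_le_1)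
next
  case (Suc r)
  obtain X where X: "extreme (down_closure E) X"
    and series: "normal_series (normal_subcomplex (down_closure E) X) (\<lambda>l. Ks (Suc l)) r"
    using Suc.prems(1) by (rule normal_series_SucE)
  have ear: "ear E X" using Suc.prems(3-5) X by (rule ear_if_extreme_down_closure)
  have "hereditary_two_ears (E - {X})"
  proof (rule Suc.IH)
    show "normal_series (down_closure (E - {X})) (\<lambda>l. Ks (Suc l)) r"
      using series normal_subcomplex_down_closure[OF Suc.prems(4,5) ear] by simp
  qed (use Suc.prems is_reduced_Diff in auto)
  then show ?case by (rule hereditary_two_ears_add_ear[OF Suc.prems(3) ear])
qed

lemma regular_down_closure_iff_hereditary_two_ears:
  assumes "finite E" "{} \<notin> E" "is_reduced E"
  shows "regular (down_closure E) \<longleftrightarrow> hereditary_two_ears E"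
  using regular_down_closure_if_hereditary_two_ears hereditary_two_ears_if_normal_series assms
  unfolding regular_def by blast

lemma acyclic_reduced_iff_hereditary_two_ears:
  assumes "finite V" "\<forall>X\<in>E. X \<subseteq> V" "finite E"
  shows "acyclic_reduced V E \<longleftrightarrow> hereditary_two_ears E"
  using acyclic_reduced_if_hereditary_two_ears[OF assms(1,3)]
    hereditary_two_ears_if_acyclic_reduced[OF assms] by blast

theorem corollary2:
  fixes V :: "'a set" and E :: "'a set set"
  assumes "hypergraph V E"
  shows "hg_acyclic V E \<longleftrightarrow> vorobev_regular V E"
proof -
  have V: "finite V" "E \<subseteq> Pow V" "{} \<notin> E" using assms unfolding hypergraph_def by auto
  then have "finite E" by (meson finite_Pow_iff finite_subset)
  let ?R = "reduce E"
  have "?R \<subseteq> E" by (rule reduce_subset)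
  then have R: "finite ?R" "{} \<notin> ?R" "is_reduced ?R" "\<forall>X\<in>?R. X \<subseteq> V"
    using \<open>finite E\<close> V(2,3) finite_subset is_reduced_reduce by auto
  have "hg_acyclic V E \<longleftrightarrow> hereditary_two_ears ?R"
    unfolding hg_acyclic_def using acyclic_reduced_iff_hereditary_two_ears[OF V(1) R(4,1)] .
  also have "\<dots> \<longleftrightarrow> regular (down_closure ?R)"
    using regular_down_closure_iff_hereditary_two_ears[OF R(1-3)] by simp
  also have "\<dots> \<longleftrightarrow> vorobev_regular V E"
    unfolding vorobev_regular_def using down_closure_reduce[OF \<open>finite E\<close>] by simp
  finally show ?thesis .
qed

end
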